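(* Let $1\le k<n$, let $w=(y_1,\dots,y_{k-r},\overline{z_r},\dots,\overline{z_1},v_1,\dots,v_{n-k})\in W^{OG(k,2n+1)}$ and $\lambda=\mathrm{Inv}(w)$. Then for $1\le i\le k$, \[\lambda^{(1)}_i=\begin{cases} n+1-k+|\{l: z_i<v_l\}| & \text{if } i\le r,\\ |\{l: y_{k+1-i}>v_l\}| & \text{if } i>r,\end{cases}\qquad \lambda^{(2)}_i=\begin{cases} |\{q: z_i<z_q\}|+|\{t: z_i<y_t\}| & \text{if } i\le r,\\ 0 & \text{if } i>r.\end{cases}\]
   Context: Root system $B_n$: positive roots $e_a\pm e_b$ ($a<b$), $e_a$. $W^{OG(k,2n+1)}$ is the set of signed permutations $w=(y_1,\dots,y_{k-r},\overline{z_r},\dots,\overline{z_1},v_1,\dots,v_{n-k})$ of $1,\dots,n$ (bars = negative entries) with $0\le r\le k$, $y_1<\dots<y_{k-r}$, $z_r>\dots>z_1$, $v_1<\dots<v_{n-k}$; so the entry in position $k+1-i$ is $\overline{z_i}$ if $i\le r$ and $y_{k+1-i}$ if $i>r$. $w$ acts by $e_a\mapsto\pm e_{|w(a)|}$ (minus if barred), and $\mathrm{Inv}(w)$ is the set of positive roots sent to negative roots. For a set $S$ of positive roots, $\lambda^{(1)}_i$ is the number of roots of $S$ among $e_{k+1-i}\pm e_b$ ($b>k$) and $e_{k+1-i}$, and $\lambda^{(2)}_i$ is the number of roots of $S$ of the form $e_a+e_{k+1-i}$ with $a<k+1-i$. *)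

theory Defs
  imports Main
begin

(* Vectors in Z^n are modelled as functions nat => int (coordinates 1..n). *)
definition evec :: "nat \<Rightarrow> nat \<Rightarrow> int" where
  "evec a = (\<lambda>j. if j = a then 1 else 0)"

definition vplus :: "(nat \<Rightarrow> int) \<Rightarrow> (nat \<Rightarrow> int) \<Rightarrow> nat \<Rightarrow> int" where
  "vplus u v = (\<lambda>j. u j + v j)"

definition vminus :: "(nat \<Rightarrow> int) \<Rightarrow> (nat \<Rightarrow> int) \<Rightarrow> nat \<Rightarrow> int" where
  "vminus u v = (\<lambda>j. u j - v j)"

definition vneg :: "(nat \<Rightarrow> int) \<Rightarrow> nat \<Rightarrow> int" where
  "vneg u = (\<lambda>j. - u j)"

definition pos_roots_B :: "nat \<Rightarrow> (nat \<Rightarrow> int) set" where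
  "pos_roots_B n =
     {vminus (evec a) (evec b) | a b. 1 \<le> a \<and> a < b \<and> b \<le> n}
   \<union> {vplus (evec a) (evec b) | a b. 1 \<le> a \<and> a < b \<and> b \<le> n}
   \<union> {evec a | a. 1 \<le> a \<and> a \<le> n}"

definition neg_roots_B :: "nat \<Rightarrow> (nat \<Rightarrow> int) set" where
  "neg_roots_B n = vneg ` pos_roots_B n"

(* A signed permutation w : {1..n} -> Z (w a = +-|w a|); it acts linearly by
   e_a |-> sgn(w a) e_{|w a|}. *)
definition signed_act :: "nat \<Rightarrow> (nat \<Rightarrow> int) \<Rightarrow> (nat \<Rightarrow> int) \<Rightarrow> nat \<Rightarrow> int" where
  "signed_act n w u = (\<lambda>j. \<Sum>a\<in>{1..n}. u a * (if nat \<bar>w a\<bar> = j then sgn (w a) else 0))"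

definition Inv_B :: "nat \<Rightarrow> (nat \<Rightarrow> int) \<Rightarrow> (nat \<Rightarrow> int) set" where
  "Inv_B n w = {\<alpha> \<in> pos_roots_B n. signed_act n w \<alpha> \<in> neg_roots_B n}"

(* the signed permutation (y_1..y_{k-r}, -z_r,..,-z_1, v_1..v_{n-k}) in one-line notation *)
definition og_word :: "nat \<Rightarrow> nat \<Rightarrow> (nat \<Rightarrow> nat) \<Rightarrow> (nat \<Rightarrow> nat) \<Rightarrow> (nat \<Rightarrow> nat) \<Rightarrow> nat \<Rightarrow> int" where
  "og_word k r y z v = (\<lambda>p. if p \<le> k - r then int (y p)
                             else if p \<le> k then - int (z (k + 1 - p))
                             else int (v (p - k)))"

definition lambda1 :: "nat \<Rightarrow> nat \<Rightarrow> (nat \<Rightarrow> int) set \<Rightarrow> nat \<Rightarrow> nat" where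
  "lambda1 n k S i = card {\<alpha> \<in> S.
      (\<exists>b. k < b \<and> b \<le> n \<and> (\<alpha> = vminus (evec (k+1-i)) (evec b) \<or> \<alpha> = vplus (evec (k+1-i)) (evec b)))
      \<or> \<alpha> = evec (k+1-i)}"

definition lambda2 :: "nat \<Rightarrow> (nat \<Rightarrow> int) set \<Rightarrow> nat \<Rightarrow> nat" where
  "lambda2 k S i = card {\<alpha> \<in> S. \<exists>a. 1 \<le> a \<and> a < k+1-i \<and> \<alpha> = vplus (evec a) (evec (k+1-i))}"

end

theory Submission
  imports Defs
begin

text \<open>A positive root of type B has leading (first nonzero) coefficient 1. So the image
  \<pm>e(|w a|) \<pm> e(|w b|) of e(a) \<pm> e(b) is a negative root exactly when its coefficient at the smaller
  of |w a|, |w b| is -1: every inversion test is a comparison of absolute values plus a sign.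
  At the position p = k+1-i the blocks y, z (barred) and v of the one-line notation fix all
  these signs, and the two counts reduce to counting entries of v, y, z above or below |w p|.\<close>

lemma pos_root_leading_coeff:
  assumes "\<alpha> \<in> pos_roots_B n"
  shows "\<exists>a. \<alpha> a = 1 \<and> (\<forall>j<a. \<alpha> j = 0)"
  using assms unfolding pos_roots_B_def
  by (auto simp: vplus_def vminus_def evec_def)

lemma neg_root_leading_coeff:
  assumes "u \<in> neg_roots_B n"
  shows "\<exists>a. u a = -1 \<and> (\<forall>j<a. u j = 0)"
  using assms pos_root_leading_coeff unfolding neg_roots_B_def vneg_def by fastforce

lemma neg_root_pair_iff_ordered:
  assumes "1 \<le> A" "A < B" "B \<le> n" and c: "c = 1 \<or> c = -1" and d: "d = 1 \<or> d = -1"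
  shows "(\<lambda>j. c * evec A j + d * evec B j) \<in> neg_roots_B n \<longleftrightarrow> c = -1"
    (is "?u \<in> _ \<longleftrightarrow> _")
proof
  assume "?u \<in> neg_roots_B n"
  then obtain a where a: "?u a = -1" "\<forall>j<a. ?u j = 0"
    using neg_root_leading_coeff by blast
  have "a = A"
    using a c d \<open>A < B\<close> by (cases "a < A"; cases "a = B") (auto simp: evec_def split: if_splits)
  then show "c = -1" using a assms by (simp add: evec_def)
next
  assume "c = -1"
  have "vplus (evec A) (evec B) \<in> pos_roots_B n" "vminus (evec A) (evec B) \<in> pos_roots_B n"
    using assms unfolding pos_roots_B_def by blast+
  moreover have "?u = vneg (if d = -1 then vplus (evec A) (evec B) else vminus (evec A) (evec B))"
    using \<open>c = -1\<close> d by (auto simp: fun_eq_iff vneg_def vplus_def vminus_def)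
  ultimately show "?u \<in> neg_roots_B n" unfolding neg_roots_B_def by auto
qed

lemma neg_root_pair_iff:
  assumes "A \<noteq> B" "A \<in> {1..n}" "B \<in> {1..n}" "c = 1 \<or> c = -1" "d = 1 \<or> d = -1"
  shows "(\<lambda>j. c * evec A j + d * evec B j) \<in> neg_roots_B n \<longleftrightarrow> (if A < B then c = -1 else d = -1)"
proof (cases "A < B")
  case True
  then show ?thesis using neg_root_pair_iff_ordered assms by simp
next
  case False
  then have "(\<lambda>j. c * evec A j + d * evec B j) = (\<lambda>j. d * evec B j + c * evec A j)" "B < A"
    using assms(1) by (auto simp: fun_eq_iff)
  then show ?thesis using neg_root_pair_iff_ordered[of B A n d c] assms by simp
qed

lemma neg_root_single_iff:
  assumes "A \<in> {1..n}" "c = 1 \<or> c = -1"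
  shows "(\<lambda>j. c * evec A j) \<in> neg_roots_B n \<longleftrightarrow> c = -1"
    (is "?u \<in> _ \<longleftrightarrow> _")
proof
  assume "?u \<in> neg_roots_B n"
  then obtain a where a: "?u a = -1" "\<forall>j<a. ?u j = 0"
    using neg_root_leading_coeff by blast
  then show "c = -1" by (auto simp: evec_def split: if_splits)
next
  assume "c = -1"
  then have "?u = vneg (evec A)" by (auto simp: fun_eq_iff vneg_def)
  moreover have "evec A \<in> pos_roots_B n" using assms unfolding pos_roots_B_def by auto
  ultimately show "?u \<in> neg_roots_B n" unfolding neg_roots_B_def by auto
qed

lemma signed_act_evec:
  assumes "a \<in> {1..n}"
  shows "signed_act n w (evec a) = (\<lambda>j. sgn (w a) * evec (nat \<bar>w a\<bar>) j)"
  using assms unfolding signed_act_def evec_def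
  by (auto simp: fun_eq_iff if_distrib[of "\<lambda>x. x * _"] cong: if_cong)

lemma signed_act_vplus: "signed_act n w (vplus u u') = vplus (signed_act n w u) (signed_act n w u')"
  unfolding signed_act_def vplus_def by (auto simp: fun_eq_iff sum.distrib distrib_right)

lemma signed_act_vminus: "signed_act n w (vminus u u') = vminus (signed_act n w u) (signed_act n w u')"
  unfolding signed_act_def vminus_def by (auto simp: fun_eq_iff sum_subtractf left_diff_distrib)

locale signed_perm =
  fixes n :: nat and w :: "nat \<Rightarrow> int"
  assumes bij_abs: "bij_betw (\<lambda>a. nat \<bar>w a\<bar>) {1..n} {1..n}"
begin

lemma abs_in_range: "a \<in> {1..n} \<Longrightarrow> nat \<bar>w a\<bar> \<in> {1..n}"
  using bij_betw_apply[OF bij_abs] .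

lemma nonzero: "a \<in> {1..n} \<Longrightarrow> w a \<noteq> 0"
  using abs_in_range by fastforce

lemma sgn_cases: "a \<in> {1..n} \<Longrightarrow> sgn (w a) = 1 \<or> sgn (w a) = -1"
  using nonzero by (auto simp: sgn_if)

lemma abs_neq: "a \<in> {1..n} \<Longrightarrow> b \<in> {1..n} \<Longrightarrow> a \<noteq> b \<Longrightarrow> \<bar>w a\<bar> \<noteq> \<bar>w b\<bar>"
  using inj_onD[OF bij_betw_imp_inj_on[OF bij_abs], of a b] by auto

lemma inv_vminus_iff:
  assumes "1 \<le> a" "a < b" "b \<le> n"
  shows "vminus (evec a) (evec b) \<in> Inv_B n w \<longleftrightarrow> (if \<bar>w a\<bar> < \<bar>w b\<bar> then w a < 0 else w b > 0)"
proof -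
  have a: "a \<in> {1..n}" and b: "b \<in> {1..n}" using assms by auto
  have "vminus (evec a) (evec b) \<in> pos_roots_B n" unfolding pos_roots_B_def using assms by blast
  then have "vminus (evec a) (evec b) \<in> Inv_B n w \<longleftrightarrow>
      signed_act n w (vminus (evec a) (evec b)) \<in> neg_roots_B n"
    unfolding Inv_B_def by simp
  also have "signed_act n w (vminus (evec a) (evec b)) =
      (\<lambda>j. sgn (w a) * evec (nat \<bar>w a\<bar>) j + (- sgn (w b)) * evec (nat \<bar>w b\<bar>) j)"
    unfolding signed_act_vminus signed_act_evec[OF a] signed_act_evec[OF b] by (simp add: vminus_def)
  also have "\<dots> \<in> neg_roots_B n \<longleftrightarrow>
      (if nat \<bar>w a\<bar> < nat \<bar>w b\<bar> then sgn (w a) = -1 else - sgn (w b) = -1)"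
    using sgn_cases[OF b] abs_neq[OF a b] assms
    by (intro neg_root_pair_iff abs_in_range a b sgn_cases) auto
  finally show ?thesis by (simp add: sgn_if nat_less_eq_zless)
qed

lemma inv_vplus_iff:
  assumes "1 \<le> a" "a < b" "b \<le> n"
  shows "vplus (evec a) (evec b) \<in> Inv_B n w \<longleftrightarrow> (if \<bar>w a\<bar> < \<bar>w b\<bar> then w a < 0 else w b < 0)"
proof -
  have a: "a \<in> {1..n}" and b: "b \<in> {1..n}" using assms by auto
  have "vplus (evec a) (evec b) \<in> pos_roots_B n" unfolding pos_roots_B_def using assms by blast
  then have "vplus (evec a) (evec b) \<in> Inv_B n w \<longleftrightarrow>
      signed_act n w (vplus (evec a) (evec b)) \<in> neg_roots_B n"
    unfolding Inv_B_def by simp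
  also have "signed_act n w (vplus (evec a) (evec b)) =
      (\<lambda>j. sgn (w a) * evec (nat \<bar>w a\<bar>) j + sgn (w b) * evec (nat \<bar>w b\<bar>) j)"
    unfolding signed_act_vplus signed_act_evec[OF a] signed_act_evec[OF b] by (simp add: vplus_def)
  also have "\<dots> \<in> neg_roots_B n \<longleftrightarrow>
      (if nat \<bar>w a\<bar> < nat \<bar>w b\<bar> then sgn (w a) = -1 else sgn (w b) = -1)"
    using abs_neq[OF a b] assms by (intro neg_root_pair_iff abs_in_range a b sgn_cases) auto
  finally show ?thesis by (simp add: sgn_if nat_less_eq_zless)
qed

lemma inv_evec_iff:
  assumes "a \<in> {1..n}"
  shows "evec a \<in> Inv_B n w \<longleftrightarrow> w a < 0"
proof -
  have "evec a \<in> pos_roots_B n" unfolding pos_roots_B_def using assms by auto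
  then have "evec a \<in> Inv_B n w \<longleftrightarrow> (\<lambda>j. sgn (w a) * evec (nat \<bar>w a\<bar>) j) \<in> neg_roots_B n"
    by (simp add: Inv_B_def signed_act_evec[OF assms])
  also have "\<dots> \<longleftrightarrow> sgn (w a) = -1"
    by (intro neg_root_single_iff abs_in_range assms sgn_cases)
  finally show ?thesis by (simp add: sgn_if)
qed

end

lemma card_lambda1:
  fixes n k i :: nat and S :: "(nat \<Rightarrow> int) set"
  assumes "1 \<le> i"
  defines "p \<equiv> k + 1 - i"
  shows "lambda1 n k S i =
      card {b \<in> {k<..n}. vminus (evec p) (evec b) \<in> S}
    + card {b \<in> {k<..n}. vplus (evec p) (evec b) \<in> S}
    + (if evec p \<in> S then 1 else 0)"
proof -
  define f1 where "f1 b = vminus (evec p) (evec b)" for b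
  define f2 where "f2 b = vplus (evec p) (evec b)" for b
  define B1 where "B1 = {b \<in> {k<..n}. f1 b \<in> S}"
  define B2 where "B2 = {b \<in> {k<..n}. f2 b \<in> S}"
  have p: "p \<notin> B1 \<union> B2" using assms by (auto simp: B1_def B2_def)
  have f1_at: "f1 b c = (if c = p then 1 else 0) - (if c = b then 1 else 0)" for b c
    by (simp add: f1_def vminus_def evec_def)
  have f2_at: "f2 b c = (if c = p then 1 else 0) + (if c = b then 1 else 0)" for b c
    by (simp add: f2_def vplus_def evec_def)
  have "inj_on f1 B1"
  proof (rule inj_onI)
    fix b b' assume "b \<in> B1" "b' \<in> B1" "f1 b = f1 b'"
    then have "f1 b' b = -1" using p f1_at[of b b] by auto
    then show "b = b'" using p f1_at[of b' b] by (auto split: if_splits)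
  qed
  moreover have "inj_on f2 B2"
  proof (rule inj_onI)
    fix b b' assume "b \<in> B2" "b' \<in> B2" "f2 b = f2 b'"
    then have "f2 b' b = 1" using p f2_at[of b b] by auto
    then show "b = b'" using p \<open>b \<in> B2\<close> f2_at[of b' b] by (auto split: if_splits)
  qed
  moreover have "f1 ` B1 \<inter> f2 ` B2 = {}"
  proof (intro equals0I)
    fix \<alpha> assume "\<alpha> \<in> f1 ` B1 \<inter> f2 ` B2"
    then obtain b b' where "b \<in> B1" "f1 b = f2 b'" by blast
    then have "f1 b b = f2 b' b" "b \<noteq> p" using p by auto
    then show False using f1_at[of b b] f2_at[of b' b] by (auto split: if_splits)
  qed
  moreover have "finite B1" "finite B2" by (simp_all add: B1_def B2_def)
  ultimately have "card (f1 ` B1 \<union> f2 ` B2) = card B1 + card B2"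
    by (simp add: card_Un_disjoint card_image)
  moreover have "evec p \<notin> f1 ` B1 \<union> f2 ` B2"
  proof
    assume "evec p \<in> f1 ` B1 \<union> f2 ` B2"
    then obtain b where "b \<noteq> p" "evec p = f1 b \<or> evec p = f2 b"
      using p by (metis UnE UnI1 UnI2 imageE)
    then have "evec p b = f1 b b \<or> evec p b = f2 b b" by auto
    then show False using \<open>b \<noteq> p\<close> f1_at[of b b] f2_at[of b b] by (simp add: evec_def)
  qed
  ultimately have "card (f1 ` B1 \<union> f2 ` B2 \<union> {\<alpha> \<in> S. \<alpha> = evec p}) =
      card B1 + card B2 + (if evec p \<in> S then 1 else 0)"
    using \<open>finite B1\<close> \<open>finite B2\<close> by (cases "evec p \<in> S") (simp_all add: Collect_conv_if)
  moreover have "{\<alpha> \<in> S. (\<exists>b. k < b \<and> b \<le> n \<and> (\<alpha> = f1 b \<or> \<alpha> = f2 b)) \<or> \<alpha> = evec p} =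
      f1 ` B1 \<union> f2 ` B2 \<union> {\<alpha> \<in> S. \<alpha> = evec p}"
    by (auto simp: B1_def B2_def)
  ultimately show ?thesis
    unfolding lambda1_def p_def[symmetric] f1_def[symmetric] f2_def[symmetric]
      B1_def[symmetric] B2_def[symmetric]
    by (simp only:)
qed

lemma card_lambda2:
  fixes k i :: nat and S :: "(nat \<Rightarrow> int) set"
  defines "p \<equiv> k + 1 - i"
  shows "lambda2 k S i = card {a \<in> {1..<p}. vplus (evec a) (evec p) \<in> S}"
proof -
  let ?A = "{a \<in> {1..<p}. vplus (evec a) (evec p) \<in> S}"
  have "{\<alpha> \<in> S. \<exists>a. 1 \<le> a \<and> a < p \<and> \<alpha> = vplus (evec a) (evec p)} = (\<lambda>a. vplus (evec a) (evec p)) ` ?A"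
    by auto
  moreover have "inj_on (\<lambda>a. vplus (evec a) (evec p)) ?A"
    by (auto simp: inj_on_def fun_eq_iff vplus_def evec_def dest!: spec)
  ultimately show ?thesis
    unfolding lambda2_def p_def[symmetric] by (simp add: card_image)
qed

lemma card_shift_greaterThanAtMost:
  fixes k n :: nat
  shows "card {b \<in> {k<..n}. P (b - k)} = card {l \<in> {1..n-k}. P l}"
proof -
  have "bij_betw (\<lambda>l. l + k) {l \<in> {1..n-k}. P l} {b \<in> {k<..n}. P (b - k)}"
    by (rule bij_betw_byWitness[where f' = "\<lambda>b. b - k"]) auto
  then show ?thesis by (simp add: bij_betw_same_card)
qed

locale og_word_setting =
  fixes n k r :: nat and y z v :: "nat \<Rightarrow> nat"
  assumes k_less_n: "k < n" and r_le_k: "r \<le> k"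
    and bij_abs_og_word: "bij_betw (\<lambda>p. nat \<bar>og_word k r y z v p\<bar>) {1..n} {1..n}"
begin

abbreviation w :: "nat \<Rightarrow> int" where "w \<equiv> og_word k r y z v"

sublocale signed_perm n w
  using bij_abs_og_word by unfold_locales

lemma og_word_y: "a \<le> k - r \<Longrightarrow> w a = int (y a)"
  by (simp add: og_word_def)

lemma og_word_z: "k - r < a \<Longrightarrow> a \<le> k \<Longrightarrow> w a = - int (z (k + 1 - a))"
  by (simp add: og_word_def)

lemma og_word_v: "k < a \<Longrightarrow> w a = int (v (a - k))"
  by (auto simp: og_word_def)

lemma y_pos: "1 \<le> t \<Longrightarrow> t \<le> k - r \<Longrightarrow> 0 < y t"
  using nonzero[of t] og_word_y[of t] k_less_n by simp

lemma z_pos: "1 \<le> q \<Longrightarrow> q \<le> r \<Longrightarrow> 0 < z q"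
proof -
  assume "1 \<le> q" "q \<le> r"
  then have "k + 1 - q \<in> {1..n}" "k - r < k + 1 - q" "k + 1 - q \<le> k" "k + 1 - (k + 1 - q) = q"
    using r_le_k k_less_n by auto
  then show "0 < z q" using nonzero[of "k + 1 - q"] og_word_z[of "k + 1 - q"] by simp
qed

lemma v_pos: "1 \<le> l \<Longrightarrow> l \<le> n - k \<Longrightarrow> 0 < v l"
  using nonzero[of "l + k"] og_word_v[of "l + k"] by simp

lemma lambda1_barred:
  assumes "1 \<le> i" "i \<le> r"
  shows "lambda1 n k (Inv_B n w) i = n + 1 - k + card {l \<in> {1..n-k}. z i < v l}"
proof -
  define p where "p = k + 1 - i"
  have p: "k - r < p" "p \<le> k" "w p = - int (z i)" and "0 < z i"
    using assms r_le_k og_word_z z_pos by (auto simp: p_def)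
  have "{b \<in> {k<..n}. vminus (evec p) (evec b) \<in> Inv_B n w} = {k<..n}"
    using p \<open>0 < z i\<close> inv_vminus_iff[of p] og_word_v v_pos by auto
  moreover have "{b \<in> {k<..n}. vplus (evec p) (evec b) \<in> Inv_B n w} = {b \<in> {k<..n}. z i < v (b - k)}"
    using p \<open>0 < z i\<close> inv_vplus_iff[of p] og_word_v by (auto split: if_splits)
  moreover have "evec p \<in> Inv_B n w"
    using p \<open>0 < z i\<close> inv_evec_iff[of p] k_less_n by auto
  ultimately show ?thesis
    using card_lambda1[where S = "Inv_B n w", OF assms(1)] card_shift_greaterThanAtMost[of k n "\<lambda>l. z i < v l"]
      k_less_n
    by (simp add: p_def)
qed

lemma lambda2_barred:
  assumes "strict_mono_on {1..r} z" "1 \<le> i" "i \<le> r"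
  shows "lambda2 k (Inv_B n w) i = card {q \<in> {1..r}. z i < z q} + card {t \<in> {1..k-r}. z i < y t}"
proof -
  define p where "p = k + 1 - i"
  have p: "k - r < p" "p \<le> k" "w p = - int (z i)" and "0 < z i"
    using assms r_le_k og_word_z z_pos by (auto simp: p_def)
  have "vplus (evec t) (evec p) \<in> Inv_B n w \<longleftrightarrow> z i < y t" if "1 \<le> t" "t \<le> k - r" for t
  proof -
    have "z i \<noteq> y t" using abs_neq[of t p] that p og_word_y[of t] k_less_n by auto
    then show ?thesis
      using inv_vplus_iff[of t p] that p \<open>0 < z i\<close> og_word_y[of t] y_pos[OF that] k_less_n by auto
  qed
  moreover have "vplus (evec a) (evec p) \<in> Inv_B n w" if "k - r < a" "a < p" for a
    using inv_vplus_iff[of a p] that p \<open>0 < z i\<close> og_word_z[of a] z_pos[of "k + 1 - a"] k_less_n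
    by (auto simp: p_def)
  ultimately have "{a \<in> {1..<p}. vplus (evec a) (evec p) \<in> Inv_B n w} =
      {t \<in> {1..k-r}. z i < y t} \<union> {k-r<..<p}"
    using p by (auto simp: not_le)
  moreover have "card ({t \<in> {1..k-r}. z i < y t} \<union> {k-r<..<p}) = card {t \<in> {1..k-r}. z i < y t} + (r - i)"
    using assms r_le_k by (subst card_Un_disjoint) (auto simp: p_def)
  moreover have "{q \<in> {1..r}. z i < z q} = {i<..r}"
    using strict_mono_on_less[OF assms(1), of i] assms by auto
  ultimately show ?thesis
    using card_lambda2[where S = "Inv_B n w"] by (simp add: p_def)
qed

lemma lambda1_unbarred:
  assumes "r < i" "i \<le> k"
  shows "lambda1 n k (Inv_B n w) i = card {l \<in> {1..n-k}. y (k+1-i) > v l}"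
proof -
  define p where "p = k + 1 - i"
  have p: "1 \<le> p" "p \<le> k - r" "w p = int (y p)" "0 < y p"
    using assms og_word_y y_pos by (auto simp: p_def)
  have "vminus (evec p) (evec b) \<in> Inv_B n w \<longleftrightarrow> v (b - k) < y p" if "k < b" "b \<le> n" for b
  proof -
    have "v (b - k) \<noteq> y p" using abs_neq[of b p] that p og_word_v[of b] by auto
    then show ?thesis
      using inv_vminus_iff[of p b] that p og_word_v[of b] v_pos[of "b - k"] by auto
  qed
  then have "{b \<in> {k<..n}. vminus (evec p) (evec b) \<in> Inv_B n w} = {b \<in> {k<..n}. v (b - k) < y p}"
    by auto
  moreover have "{b \<in> {k<..n}. vplus (evec p) (evec b) \<in> Inv_B n w} = {}"
    using p inv_vplus_iff[of p] og_word_v by (auto split: if_splits)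
  moreover have "evec p \<notin> Inv_B n w"
    using p inv_evec_iff[of p] k_less_n by auto
  ultimately show ?thesis
    using card_lambda1[where S = "Inv_B n w"] card_shift_greaterThanAtMost[of k n "\<lambda>l. v l < y p"] assms
    by (simp add: p_def)
qed

lemma lambda2_unbarred:
  assumes "r < i" "i \<le> k"
  shows "lambda2 k (Inv_B n w) i = 0"
proof -
  define p where "p = k + 1 - i"
  have p: "p \<le> k - r" "w p = int (y p)" "0 < y p"
    using assms og_word_y y_pos by (auto simp: p_def)
  then have "{a \<in> {1..<p}. vplus (evec a) (evec p) \<in> Inv_B n w} = {}"
    using inv_vplus_iff[of _ p] og_word_y k_less_n by (auto split: if_splits)
  then show ?thesis using card_lambda2[where S = "Inv_B n w"] by (simp add: p_def)
qed

end

theorem lemma3p6: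
  fixes n k r :: nat and y z v :: "nat \<Rightarrow> nat"
  assumes "1 \<le> k" and "k < n" and "r \<le> k"
    and "strict_mono_on {1..k-r} y"
    and "strict_mono_on {1..r} z"
    and "strict_mono_on {1..n-k} v"
    and "bij_betw (\<lambda>p. nat \<bar>og_word k r y z v p\<bar>) {1..n} {1..n}"
    and "1 \<le> i" and "i \<le> k"
  shows "lambda1 n k (Inv_B n (og_word k r y z v)) i =
           (if i \<le> r then n + 1 - k + card {l \<in> {1..n-k}. z i < v l}
            else card {l \<in> {1..n-k}. y (k+1-i) > v l})
       \<and> lambda2 k (Inv_B n (og_word k r y z v)) i =
           (if i \<le> r then card {q \<in> {1..r}. z i < z q} + card {t \<in> {1..k-r}. z i < y t}
            else 0)"
proof -
  interpret og_word_setting n k r y z v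
    using assms by unfold_locales
  show ?thesis
  proof (cases "i \<le> r")
    case True
    then show ?thesis using lambda1_barred lambda2_barred assms by simp
  next
    case False
    then show ?thesis using lambda1_unbarred lambda2_unbarred assms by simp
  qed
qed

end
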